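(* Let $m>2$ and $\beta\in(0,1)$. (a) There exist $b>0$ and $\chi\in C^\infty((-\infty,b))$ with $\chi(s)=0$ for all $s\le0$ and $\chi(s)\to+\infty$ as $s\to b^-$, such that $$\frac{m-2}{m}\left(\frac{\chi''(s)}{\left[(1+\chi'(s))^m-(1+\chi'(s))\right]^{2/m}}\right)^{\frac{m}{m-2}}\le(\chi'(s))^\beta\quad\text{for all }s\in(0,b).$$ (b) There exists $\xi\in C^\infty(\mathbb{R})$ with $\xi(s)=s$ for all $s\le0$ and $\xi(s)$ increasing to some limit $M>0$ as $s\to+\infty$, such that $$\frac{m-2}{m}\left(\frac{-\xi''(s)}{\left[\xi'(s)-(\xi'(s))^m\right]^{2/m}}\right)^{\frac{m}{m-2}}\le(1-\xi'(s))^\beta\quad\text{for all }s\in(0,+\infty).$$ *)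

theory Defs
  imports "HOL-Analysis.Analysis"
begin

definition smooth_on :: "real set \<Rightarrow> (real \<Rightarrow> real) \<Rightarrow> bool" where
  "smooth_on S f \<longleftrightarrow> (\<forall>k. \<forall>x\<in>S. ((deriv ^^ k) f) differentiable (at x))"

end

theory Submission
  imports Defs "HOL-Computational_Algebra.Polynomial" "HOL-Real_Asymp.Real_Asymp"
begin

(* Both profiles are built from the flat ramp R(s) = s exp(-1/s) (R = 0 for s <= 0), which is
  smooth because the functions poly p (1/s) exp(-1/s) are flat at 0 and closed under
  differentiation. With x = 1/s, R'(s) = exp(-x) (1 + x) lies in (0,1) and R''(s) = x^3 exp(-x).
  Put q = 2/m + beta (1 - 2/m) in (0,1); by monotonicity of powers the two inequalities reduce to
  chi'' <= chi'^q (1 + chi') and -xi'' <= xi' (1 - xi')^q.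

  For (b) take xi(s) = s - L R(s/L), which increases to L. The reduced inequality becomes
  x^3 exp(-x) <= L (1 - exp(-x) (1 + x)) (exp(-x) (1 + x))^q, which holds for L = 135/(1-q)^3.

  For (a) take chi = B/a ((R(b) - R)^(-a) - R(b)^(-a)) with a = 1/q - 1, which blows up at b.
  With u = R(b) - R(s) one gets chi'' = (a+1) chi' R'/u + chi' R''/R', and B = (2(a+1))^(a+1)
  makes chi'^q = 2(a+1) R'^q / u. The first term is at most chi'^(1+q)/2 since R' <= 1. For large
  b the second term is at most chi'^q while u >= R(b)/2, because R'' <= C R'^q and u is large;
  otherwise s is large, R'' <= s^-3 is negligible against R' (close to 1), and the second term is
  at most chi'^(1+q)/2. *)

primrec Ck_on :: "nat \<Rightarrow> real set \<Rightarrow> (real \<Rightarrow> real) \<Rightarrow> bool" where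
  "Ck_on 0 S f = True"
| "Ck_on (Suc k) S f = (\<exists>f'. (\<forall>x\<in>S. (f has_real_derivative f' x) (at x)) \<and> Ck_on k S f')"

lemma Ck_on_SucD: "Ck_on (Suc k) S f \<Longrightarrow> Ck_on k S f"
proof (induction k arbitrary: f)
  case (Suc k)
  then obtain f' where "\<forall>x\<in>S. (f has_real_derivative f' x) (at x)" "Ck_on (Suc k) S f'" by auto
  with Suc.IH[of f'] show ?case by auto
qed simp

lemma Ck_on_const: "Ck_on k S (\<lambda>x. c)"
proof (induction k arbitrary: c)
  case (Suc k)
  then show ?case by (auto intro!: exI[of _ "\<lambda>x. 0"])
qed simp

lemma Ck_on_ident: "Ck_on k S (\<lambda>x. x)"
  by (cases k) (auto intro!: exI[of _ "\<lambda>x. 1"] Ck_on_const)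

lemma Ck_on_add: "Ck_on k S f \<Longrightarrow> Ck_on k S g \<Longrightarrow> Ck_on k S (\<lambda>x. f x + g x)"
proof (induction k arbitrary: f g)
  case (Suc k)
  then obtain f' g' where f': "\<forall>x\<in>S. (f has_real_derivative f' x) (at x)" "Ck_on k S f'"
    and g': "\<forall>x\<in>S. (g has_real_derivative g' x) (at x)" "Ck_on k S g'" by auto
  have "\<forall>x\<in>S. ((\<lambda>x. f x + g x) has_real_derivative f' x + g' x) (at x)"
    using f' g' by (auto intro: derivative_intros)
  with Suc.IH[OF f'(2) g'(2)] show ?case by auto
qed simp

lemma Ck_on_mult: "Ck_on k S f \<Longrightarrow> Ck_on k S g \<Longrightarrow> Ck_on k S (\<lambda>x. f x * g x)"
proof (induction k arbitrary: f g)
  case (Suc k)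
  then obtain f' g' where f': "\<forall>x\<in>S. (f has_real_derivative f' x) (at x)" "Ck_on k S f'"
    and g': "\<forall>x\<in>S. (g has_real_derivative g' x) (at x)" "Ck_on k S g'" by auto
  have f: "Ck_on k S f" and g: "Ck_on k S g" using Suc.prems Ck_on_SucD by blast+
  have "\<forall>x\<in>S. ((\<lambda>x. f x * g x) has_real_derivative f' x * g x + f x * g' x) (at x)"
    using f' g' by (auto intro!: derivative_eq_intros)
  moreover have "Ck_on k S (\<lambda>x. f' x * g x + f x * g' x)"
    using Suc.IH[OF f'(2) g] Suc.IH[OF f g'(2)] Ck_on_add by blast
  ultimately show ?case by auto
qed simp

lemma Ck_on_diff: "Ck_on k S f \<Longrightarrow> Ck_on k S g \<Longrightarrow> Ck_on k S (\<lambda>x. f x - g x)"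
proof -
  assume "Ck_on k S f" "Ck_on k S g"
  then have "Ck_on k S (\<lambda>x. f x + (-1) * g x)" by (intro Ck_on_add Ck_on_mult Ck_on_const)
  then show ?thesis by simp
qed

lemma Ck_on_compose:
  "Ck_on k T h \<Longrightarrow> Ck_on k S f \<Longrightarrow> f ` S \<subseteq> T \<Longrightarrow> Ck_on k S (\<lambda>x. h (f x))"
proof (induction k arbitrary: h f)
  case (Suc k)
  then obtain h' f' where h': "\<forall>y\<in>T. (h has_real_derivative h' y) (at y)" "Ck_on k T h'"
    and f': "\<forall>x\<in>S. (f has_real_derivative f' x) (at x)" "Ck_on k S f'" by auto
  have f: "Ck_on k S f" using Suc.prems Ck_on_SucD by blast
  have "\<forall>x\<in>S. ((\<lambda>x. h (f x)) has_real_derivative h' (f x) * f' x) (at x)"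
    using h'(1) f'(1) Suc.prems(3) DERIV_chain2 by blast
  moreover have "Ck_on k S (\<lambda>x. h' (f x) * f' x)"
    using Suc.IH[OF h'(2) f Suc.prems(3)] f'(2) Ck_on_mult by blast
  ultimately show ?case by auto
qed simp

lemma Ck_on_powr: "Ck_on k {0<..} (\<lambda>x. x powr a)"
proof (induction k arbitrary: a)
  case (Suc k)
  have "\<forall>x\<in>{0<..}. ((\<lambda>x. x powr a) has_real_derivative a * x powr (a - 1)) (at x)"
    by (auto intro!: derivative_eq_intros)
  moreover have "Ck_on k {0<..} (\<lambda>x. a * x powr (a - 1))"
    using Suc.IH Ck_on_mult Ck_on_const by blast
  ultimately show ?case by auto
qed simp

lemma Ck_on_deriv:
  assumes "open S" "\<forall>k. Ck_on k S f"
  shows "Ck_on k S (deriv f)"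
proof -
  have "Ck_on (Suc (Suc k)) S f" using assms(2) by blast
  then obtain f' f'' where f': "\<forall>x\<in>S. (f has_real_derivative f' x) (at x)"
    and f'': "\<forall>x\<in>S. (f' has_real_derivative f'' x) (at x)" and "Ck_on k S f''" by auto
  moreover have "\<forall>x\<in>S. (deriv f has_real_derivative f'' x) (at x)"
    using f' f'' has_field_derivative_transform_within_open[OF _ assms(1)] DERIV_imp_deriv
    by metis
  ultimately have "Ck_on (Suc k) S (deriv f)" by auto
  then show ?thesis by (rule Ck_on_SucD)
qed

lemma smooth_onI:
  assumes "open S" "\<forall>k. Ck_on k S f"
  shows "smooth_on S f"
proof -
  have "\<forall>j. Ck_on j S ((deriv ^^ k) f)" for k
    by (induction k) (use assms Ck_on_deriv in auto)
  then have "Ck_on (Suc 0) S ((deriv ^^ k) f)" for k by blast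
  then show ?thesis unfolding smooth_on_def by (auto simp: real_differentiable_def)
qed

definition flat :: "real poly \<Rightarrow> real \<Rightarrow> real" where
  "flat p s = (if s > 0 then poly p (1/s) * exp (-1/s) else 0)"

definition flat_deriv_poly :: "real poly \<Rightarrow> real poly" where
  "flat_deriv_poly p = [:0,0,1:] * (p - pderiv p)"

lemma poly_times_exp_neg_tendsto_0:
  fixes p :: "real poly"
  shows "((\<lambda>x. poly p x * exp (-x)) \<longlongrightarrow> 0) at_top"
proof -
  have eq: "poly p x * exp (-x) = (\<Sum>i\<le>degree p. coeff p i * (x ^ i / exp x))" for x
    by (simp add: poly_altdef exp_minus divide_inverse sum_distrib_right mult.assoc)
  have "((\<lambda>x. \<Sum>i\<le>degree p. coeff p i * (x ^ i / exp x))
      \<longlongrightarrow> (\<Sum>i\<le>degree p. coeff p i * 0)) at_top"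
    by (intro tendsto_sum tendsto_mult tendsto_const tendsto_power_div_exp_0)
  then show ?thesis by (simp add: eq)
qed

lemma poly_inverse_times_exp_tendsto_0:
  fixes p :: "real poly"
  shows "((\<lambda>s. poly p (1/s) * exp (-1/s)) \<longlongrightarrow> 0) (at_right 0)"
proof -
  have "((\<lambda>s. poly p (inverse s) * exp (- inverse s)) \<longlongrightarrow> 0) (at_right 0)"
    using filterlim_compose[OF poly_times_exp_neg_tendsto_0 filterlim_inverse_at_top_right]
    by (simp add: o_def)
  then show ?thesis by (simp add: divide_inverse minus_divide_left)
qed

lemma has_real_derivative_flat: "(flat p has_real_derivative flat (flat_deriv_poly p) x) (at x)"
proof (cases x "0 :: real" rule: linorder_cases)
  case less
  have "((\<lambda>s. 0) has_real_derivative 0) (at x)" by simp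
  then have "(flat p has_real_derivative 0) (at x)"
    by (rule has_field_derivative_transform_within_open[of _ _ _ "{..<0}"])
      (use less in \<open>auto simp: flat_def\<close>)
  then show ?thesis using less by (simp add: flat_def)
next
  case equal
  have left: "((\<lambda>y. (flat p y - flat p 0) / (y - 0)) \<longlongrightarrow> 0) (at_left 0)"
  proof (rule tendsto_eventually)
    show "\<forall>\<^sub>F y in at_left 0. (flat p y - flat p 0) / (y - 0) = (0::real)"
      using eventually_at_left_real[of "-1" 0] by (rule eventually_mono) (auto simp: flat_def)
  qed
  have "\<forall>\<^sub>F y in at_right 0.
      poly ([:0,1:] * p) (1/y) * exp (-1/y) = (flat p y - flat p 0) / (y - 0)"
    using eventually_at_right_real[of 0 1] by (rule eventually_mono) (auto simp: flat_def)
  then have right: "((\<lambda>y. (flat p y - flat p 0) / (y - 0)) \<longlongrightarrow> 0) (at_right 0)"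
    using tendsto_cong poly_inverse_times_exp_tendsto_0 by fast
  have "flat (flat_deriv_poly p) 0 = 0" by (simp add: flat_def)
  then show ?thesis using equal left right
    by (simp add: has_field_derivative_iff filterlim_at_split)
next
  case greater
  have "((\<lambda>s. poly p (1/s) * exp (-1/s)) has_real_derivative
      poly (pderiv p) (1/x) * (- 1 / x^2) * exp (-1/x) + poly p (1/x) * (exp (-1/x) * (1/x^2))) (at x)"
    using greater by (auto intro!: derivative_eq_intros simp: power2_eq_square field_simps)
  moreover have "poly (pderiv p) (1/x) * (- 1 / x^2) * exp (-1/x) + poly p (1/x) * (exp (-1/x) * (1/x^2))
      = flat (flat_deriv_poly p) x"
    using greater by (simp add: flat_def flat_deriv_poly_def algebra_simps power2_eq_square)
  ultimately have "((\<lambda>s. poly p (1/s) * exp (-1/s))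
      has_real_derivative flat (flat_deriv_poly p) x) (at x)"
    by simp
  then show ?thesis
    by (rule has_field_derivative_transform_within_open[of _ _ _ "{0<..}"])
      (use greater in \<open>auto simp: flat_def\<close>)
qed

lemma Ck_on_flat: "Ck_on k S (flat p)"
proof (induction k arbitrary: p)
  case (Suc k)
  then show ?case using has_real_derivative_flat by auto
qed simp

lemma exp_neg_mult_add_one_less_1:
  fixes x :: real
  assumes "0 < x"
  shows "exp (-x) * (1 + x) < 1"
proof -
  have "1 + x + x^2/2 \<le> exp x" using exp_lower_Taylor_quadratic[of x] assms by simp
  moreover have "0 < x^2/2" using assms by simp
  ultimately have "1 + x < exp x" by linarith
  then show ?thesis by (simp add: exp_minus field_simps)
qed

lemma exp_neg_mult_le_powr:
  fixes x q :: real
  assumes "0 \<le> x" "0 \<le> q"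
  shows "exp (-(q*x)) \<le> (exp (-x) * (1 + x)) powr q"
proof -
  have "exp (-x) powr q \<le> (exp (-x) * (1 + x)) powr q"
    using assms by (intro powr_mono2) auto
  then show ?thesis by (simp add: powr_def)
qed

lemma cube_mult_exp_le:
  fixes x e :: real
  assumes "0 \<le> x" "0 < e"
  shows "x^3 * exp (-e*x) \<le> 27 / e^3"
proof -
  have "e*x/3 \<le> exp (e*x/3)" using exp_ge_add_one_self[of "e*x/3"] by linarith
  then have "(e*x/3)^3 \<le> exp (e*x/3)^3" using assms by (intro power_mono) auto
  also have "exp (e*x/3)^3 = exp (e*x)" by (simp add: exp_of_nat_mult[symmetric])
  finally have "x^3 \<le> 27 / e^3 * exp (e*x)"
    using assms by (simp add: power_divide power_mult_distrib field_simps)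
  then have "x^3 * exp (-e*x) \<le> 27 / e^3 * exp (e*x) * exp (-e*x)"
    by (intro mult_right_mono) auto
  then show ?thesis by (simp add: mult.assoc exp_add[symmetric])
qed

lemma cube_mult_exp_le_gap:
  fixes x e :: real
  assumes x: "0 < x" and e: "0 < e" "e \<le> 1"
  shows "x^3 * exp (-e*x) \<le> 135 / e^3 * (1 - exp (-x) * (1 + x))"
proof -
  have taylor: "1 + x + x^2/2 \<le> exp x" using exp_lower_Taylor_quadratic[of x] x by simp
  have gap: "1 - exp (-x) * (1 + x) = (exp x - (1 + x)) / exp x"
    by (simp add: exp_minus field_simps)
  show ?thesis
  proof (cases "x < 1")
    case True
    have "exp x \<le> 3" using exp_le exp_le_cancel_iff[of x 1] True by linarith
    then have "x^2/6 * exp x \<le> x^2/6 * 3" by (intro mult_left_mono) auto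
    then have "x^2/6 * exp x \<le> exp x - (1 + x)" using taylor by linarith
    then have gap_ge: "x^2 \<le> 6 * (1 - exp (-x) * (1 + x))" unfolding gap by (simp add: field_simps)
    have "exp (-e*x) \<le> 1" using x e by simp
    then have "x^3 * exp (-e*x) \<le> x^3" using x by (simp add: mult_left_le)
    also have "\<dots> \<le> x^2" using x True by (simp add: power_decreasing)
    also have "\<dots> \<le> 6 * (1 - exp (-x) * (1 + x))" by (rule gap_ge)
    also have "\<dots> \<le> 135 / e^3 * (1 - exp (-x) * (1 + x))"
      using e power_le_one[of e 3] exp_neg_mult_add_one_less_1[OF x]
      by (intro mult_right_mono) (auto simp: field_simps)
    finally show ?thesis .
  next
    case False
    have "0 \<le> (2*x + 1) * (x - 1)" using False by simp
    then have "5 * (1 + x) \<le> 4 * exp x"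
      using taylor by (simp add: algebra_simps power2_eq_square)
    then have "1/5 \<le> 1 - exp (-x) * (1 + x)" unfolding gap by (simp add: field_simps)
    then have "135 / e^3 * (1/5) \<le> 135 / e^3 * (1 - exp (-x) * (1 + x))"
      using e by (intro mult_left_mono) auto
    then show ?thesis using cube_mult_exp_le[of x e] x e by simp
  qed
qed

definition ramp :: "real \<Rightarrow> real" where
  "ramp s = (if s > 0 then s * exp (-1/s) else 0)"

definition ramp_deriv :: "real \<Rightarrow> real" where
  "ramp_deriv s = (if s > 0 then exp (-1/s) * (1 + 1/s) else 0)"

definition ramp_deriv2 :: "real \<Rightarrow> real" where
  "ramp_deriv2 s = exp (-1/s) / s^3"

lemma ramp_eq_flat: "ramp = (\<lambda>s. s * flat 1 s)"
  by (auto simp: ramp_def flat_def)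

lemma Ck_on_ramp: "Ck_on k S ramp"
  unfolding ramp_eq_flat by (intro Ck_on_mult Ck_on_ident Ck_on_flat)

lemma has_real_derivative_ramp: "(ramp has_real_derivative ramp_deriv s) (at s)"
proof -
  have "(ramp has_real_derivative s * flat (flat_deriv_poly 1) s + 1 * flat 1 s) (at s)"
    unfolding ramp_eq_flat by (rule DERIV_mult'[OF DERIV_ident has_real_derivative_flat])
  moreover have "s * flat (flat_deriv_poly 1) s + 1 * flat 1 s = ramp_deriv s"
    by (simp add: flat_def flat_deriv_poly_def ramp_deriv_def power2_eq_square field_simps)
  ultimately show ?thesis by simp
qed

lemma has_real_derivative_ramp_deriv:
  assumes "0 < s"
  shows "(ramp_deriv has_real_derivative ramp_deriv2 s) (at s)"
proof -
  have "((\<lambda>s. exp (-1/s) * (1 + 1/s)) has_real_derivative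
      exp (-1/s) * (1/s^2) * (1 + 1/s) + exp (-1/s) * (- 1/s^2)) (at s)"
    using assms by (auto intro!: derivative_eq_intros simp: power2_eq_square field_simps)
  moreover have "exp (-1/s) * (1/s^2) * (1 + 1/s) + exp (-1/s) * (- 1/s^2) = ramp_deriv2 s"
    using assms by (simp add: ramp_deriv2_def power2_eq_square power3_eq_cube field_simps)
  ultimately have "((\<lambda>s. exp (-1/s) * (1 + 1/s)) has_real_derivative ramp_deriv2 s) (at s)"
    by simp
  then show ?thesis
    by (rule has_field_derivative_transform_within_open[of _ _ _ "{0<..}"])
      (use assms in \<open>auto simp: ramp_deriv_def\<close>)
qed

lemma ramp_deriv_pos: "0 < s \<Longrightarrow> 0 < ramp_deriv s"
  by (simp add: ramp_deriv_def add_pos_pos)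

lemma ramp_deriv_less_1: "0 < s \<Longrightarrow> ramp_deriv s < 1"
  using exp_neg_mult_add_one_less_1[of "1/s"] by (simp add: ramp_deriv_def)

lemma ramp_deriv_le_1: "ramp_deriv s \<le> 1"
  using ramp_deriv_less_1[of s] by (cases "s > 0") (auto simp: ramp_deriv_def)

lemma ramp_deriv_ge: "0 < s \<Longrightarrow> 1 - 1/s \<le> ramp_deriv s"
proof -
  assume s: "0 < s"
  have "1 - 1/s \<le> exp (-1/s)" using exp_ge_add_one_self[of "-1/s"] by simp
  also have "\<dots> \<le> exp (-1/s) * (1 + 1/s)" using s by simp
  finally show ?thesis using s by (simp add: ramp_deriv_def)
qed

lemma ramp_nonpos: "s \<le> 0 \<Longrightarrow> ramp s = 0"
  by (simp add: ramp_def)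

lemma ramp_nonneg: "0 \<le> ramp s"
  by (simp add: ramp_def)

lemma ramp_le_self: "0 \<le> s \<Longrightarrow> ramp s \<le> s"
  by (simp add: ramp_def mult_left_le)

lemma ramp_ge: "0 < s \<Longrightarrow> s - 1 \<le> ramp s"
proof -
  assume s: "0 < s"
  have "s * (1 - 1/s) \<le> s * exp (-1/s)"
    using s exp_ge_add_one_self[of "-1/s"] by (intro mult_left_mono) auto
  moreover have "s * (1 - 1/s) = s - 1" using s by (simp add: field_simps)
  ultimately show ?thesis using s by (simp add: ramp_def)
qed

lemma ramp_less: "s < t \<Longrightarrow> 0 < t \<Longrightarrow> ramp s < ramp t"
proof (cases "0 < s")
  case True
  assume "s < t"
  then show ?thesis
    by (rule DERIV_pos_imp_increasing) (use True has_real_derivative_ramp ramp_deriv_pos in force)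
qed (simp add: ramp_def)

lemma ramp_deriv2_le_cube: "0 < s \<Longrightarrow> ramp_deriv2 s \<le> 1 / s^3"
  by (simp add: ramp_deriv2_def divide_right_mono)

lemma ramp_deriv2_le_mult_powr:
  assumes "0 < s" "0 \<le> q"
  shows "ramp_deriv2 s \<le> (1/s)^3 * exp (-(1 - q) * (1/s)) * ramp_deriv s powr q"
proof -
  define x where "x = 1/s"
  have x: "0 < x" using assms by (simp add: x_def)
  have "exp (-x) = exp (-(1 - q) * x) * exp (-(q*x))"
    by (simp add: mult_exp_exp algebra_simps)
  then have "ramp_deriv2 s = x^3 * exp (-(1 - q) * x) * exp (-(q*x))"
    using assms by (simp add: ramp_deriv2_def x_def power_divide)
  also have "\<dots> \<le> x^3 * exp (-(1 - q) * x) * (exp (-x) * (1 + x)) powr q"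
    using exp_neg_mult_le_powr[of x q] x assms by (intro mult_left_mono) auto
  finally show ?thesis using assms by (simp add: x_def ramp_deriv_def)
qed

lemma ramp_deriv2_le:
  assumes "0 < s" "0 < q" "q < 1"
  shows "ramp_deriv2 s \<le> 27 / (1 - q)^3 * ramp_deriv s powr q"
proof -
  have "(1/s)^3 * exp (-(1 - q) * (1/s)) \<le> 27 / (1 - q)^3"
    using cube_mult_exp_le[of "1/s" "1 - q"] assms by simp
  then have "(1/s)^3 * exp (-(1 - q) * (1/s)) * ramp_deriv s powr q
      \<le> 27 / (1 - q)^3 * ramp_deriv s powr q"
    by (rule mult_right_mono) simp
  then show ?thesis using ramp_deriv2_le_mult_powr[of s q] assms by linarith
qed

lemma ramp_deriv2_le_gap:
  assumes "0 < s" "0 < q" "q < 1"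
  shows "ramp_deriv2 s \<le> 135 / (1 - q)^3 * (1 - ramp_deriv s) * ramp_deriv s powr q"
proof -
  have "(1/s)^3 * exp (-(1 - q) * (1/s)) \<le> 135 / (1 - q)^3 * (1 - ramp_deriv s)"
    using cube_mult_exp_le_gap[of "1/s" "1 - q"] assms by (simp add: ramp_deriv_def)
  then have "(1/s)^3 * exp (-(1 - q) * (1/s)) * ramp_deriv s powr q
      \<le> (135 / (1 - q)^3 * (1 - ramp_deriv s)) * ramp_deriv s powr q"
    by (rule mult_right_mono) simp
  then show ?thesis using ramp_deriv2_le_mult_powr[of s q] assms by linarith
qed

lemma scaled_powr_le:
  fixes m Y Z \<beta> :: real
  assumes m: "m > 2" and "0 \<le> Y" "0 \<le> Z" and "Y \<le> Z powr (\<beta> * (1 - 2/m))"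
  shows "(m - 2) / m * Y powr (m / (m - 2)) \<le> Z powr \<beta>"
proof -
  have "Y powr (m / (m - 2)) \<le> (Z powr (\<beta> * (1 - 2/m))) powr (m / (m - 2))"
    using assms by (intro powr_mono2) auto
  also have "\<dots> = Z powr \<beta>"
  proof -
    have "\<beta> * (1 - 2/m) * (m / (m - 2)) = \<beta>" using m by (simp add: field_simps)
    then show ?thesis by (simp add: powr_powr)
  qed
  finally have "Y powr (m / (m - 2)) \<le> Z powr \<beta>" .
  moreover have "(m - 2) / m * Y powr (m / (m - 2)) \<le> Y powr (m / (m - 2))"
    using m by (intro mult_left_le_one_le) auto
  ultimately show ?thesis by linarith
qed

lemma blowup_ineq_of_le:
  fixes m \<beta> c X :: real
  assumes m: "m > 2" and c: "c > 0" and X: "0 \<le> X"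
    and X_le: "X \<le> c powr (2/m + \<beta> * (1 - 2/m)) * (1 + c)"
  shows "(m - 2) / m * (X / ((1 + c) powr m - (1 + c)) powr (2 / m)) powr (m / (m - 2))
         \<le> c powr \<beta>"
proof -
  define p where "p = 2/m"
  have p: "0 < p" "p < 1" using m by (auto simp: p_def)
  define D where "D = (1 + c) powr m - (1 + c)"
  have "1 + c \<le> (1 + c) powr (m - 1)"
    using m c powr_mono[of 1 "m - 1" "1 + c"] by simp
  moreover have "(1 + c) powr m = (1 + c) * (1 + c) powr (m - 1)"
    using c by (simp add: powr_mult_base)
  ultimately have "c * (1 + c) powr (m - 1) \<le> D" by (simp add: D_def algebra_simps)
  have "c powr p * (1 + c) \<le> c powr p * (1 + c) powr (2 - p)"
    using p c powr_mono[of 1 "2 - p" "1 + c"] by (intro mult_left_mono) auto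
  also have "\<dots> = (c * (1 + c) powr (m - 1)) powr p"
    using c m by (simp add: powr_mult powr_powr p_def field_simps)
  also have "\<dots> \<le> D powr p"
    using \<open>c * (1 + c) powr (m - 1) \<le> D\<close> c p by (intro powr_mono2) auto
  finally have D_ge: "c powr p * (1 + c) \<le> D powr p" .
  have pos: "0 < c powr p * (1 + c)" using c by simp
  have "X / D powr p \<le> X / (c powr p * (1 + c))"
    using D_ge pos X less_le_trans[OF pos D_ge] by (intro divide_left_mono) auto
  also have "\<dots> \<le> c powr (p + \<beta> * (1 - 2/m)) * (1 + c) / (c powr p * (1 + c))"
    using X_le pos by (intro divide_right_mono) (auto simp: p_def)
  also have "\<dots> = c powr (\<beta> * (1 - 2/m))" using c by (simp add: powr_add)
  finally have "X / D powr p \<le> c powr (\<beta> * (1 - 2/m))" .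
  from scaled_powr_le[OF m _ _ this] X c show ?thesis by (simp add: D_def p_def)
qed

lemma saturation_ineq_of_le:
  fixes m \<beta> d X :: real
  assumes m: "m > 2" and d: "0 < d" "d < 1" and X: "0 \<le> X"
    and X_le: "X \<le> d * (1 - d) powr (2/m + \<beta> * (1 - 2/m))"
  shows "(m - 2) / m * (X / (d - d powr m) powr (2 / m)) powr (m / (m - 2))
         \<le> (1 - d) powr \<beta>"
proof -
  define p where "p = 2/m"
  have p: "0 < p" "p < 1" using m by (auto simp: p_def)
  define D where "D = d - d powr m"
  have "d powr m \<le> d powr 2" using m d by (intro powr_mono') auto
  then have "d * (1 - d) \<le> D" using d by (simp add: D_def power2_eq_square algebra_simps)
  have "d * (1 - d) powr p \<le> d powr p * (1 - d) powr p"
    using p d powr_mono'[of p 1 d] by (intro mult_right_mono) auto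
  also have "\<dots> = (d * (1 - d)) powr p" using d by (simp add: powr_mult)
  also have "\<dots> \<le> D powr p"
    using \<open>d * (1 - d) \<le> D\<close> d p by (intro powr_mono2) auto
  finally have D_ge: "d * (1 - d) powr p \<le> D powr p" .
  have pos: "0 < d * (1 - d) powr p" using d by simp
  have "X / D powr p \<le> X / (d * (1 - d) powr p)"
    using D_ge pos X less_le_trans[OF pos D_ge] by (intro divide_left_mono) auto
  also have "\<dots> \<le> d * (1 - d) powr (p + \<beta> * (1 - 2/m)) / (d * (1 - d) powr p)"
    using X_le pos by (intro divide_right_mono) (auto simp: p_def)
  also have "\<dots> = (1 - d) powr (\<beta> * (1 - 2/m))" using d by (simp add: powr_add)
  finally have "X / D powr p \<le> (1 - d) powr (\<beta> * (1 - 2/m))" .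
  from scaled_powr_le[OF m _ _ this] X d show ?thesis by (simp add: D_def p_def)
qed

lemma deriv2_eqI:
  assumes "open S" "x \<in> S"
    and "\<And>y. y \<in> S \<Longrightarrow> (f has_real_derivative f' y) (at y)"
    and "(f' has_real_derivative f'') (at x)"
  shows "deriv f x = f' x" "deriv (deriv f) x = f''"
proof -
  show "deriv f x = f' x" using assms(2,3) DERIV_imp_deriv by blast
  have "\<And>y. y \<in> S \<Longrightarrow> f' y = deriv f y" using assms(3) DERIV_imp_deriv by metis
  then have "(deriv f has_real_derivative f'') (at x)"
    using has_field_derivative_transform_within_open[OF assms(4,1,2)] by blast
  then show "deriv (deriv f) x = f''" by (rule DERIV_imp_deriv)
qed

definition saturation :: "real \<Rightarrow> real \<Rightarrow> real" where
  "saturation L s = s - L * ramp (s / L)"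

context
  fixes L :: real
  assumes L: "0 < L"
begin

lemma has_real_derivative_saturation:
  "(saturation L has_real_derivative 1 - ramp_deriv (s / L)) (at s)"
proof -
  have "((\<lambda>s. ramp (s / L)) has_real_derivative ramp_deriv (s / L) * (1 / L)) (at s)"
    by (rule DERIV_chain2[OF has_real_derivative_ramp])
      (use L in \<open>auto intro!: derivative_eq_intros\<close>)
  then have "(saturation L has_real_derivative 1 - L * (ramp_deriv (s / L) * (1 / L))) (at s)"
    unfolding saturation_def by (intro derivative_intros DERIV_cmult)
  then show ?thesis using L by simp
qed

lemma has_real_derivative_saturation_deriv:
  assumes "0 < s"
  shows "((\<lambda>s. 1 - ramp_deriv (s / L)) has_real_derivative - (ramp_deriv2 (s / L) / L)) (at s)"
proof -
  have "((\<lambda>s. ramp_deriv (s / L)) has_real_derivative ramp_deriv2 (s / L) * (1 / L)) (at s)"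
    by (rule DERIV_chain2[OF has_real_derivative_ramp_deriv])
      (use assms L in \<open>auto intro!: derivative_eq_intros\<close>)
  then have "((\<lambda>s. 1 - ramp_deriv (s / L)) has_real_derivative
      0 - ramp_deriv2 (s / L) * (1 / L)) (at s)"
    by (intro derivative_intros)
  then show ?thesis by simp
qed

lemma smooth_on_saturation: "smooth_on UNIV (saturation L)"
proof (rule smooth_onI)
  show "\<forall>k. Ck_on k UNIV (saturation L)"
  proof
    fix k
    have "Ck_on k UNIV (\<lambda>s. s * (1 / L))" by (intro Ck_on_mult Ck_on_ident Ck_on_const)
    then have "Ck_on k UNIV (\<lambda>s. ramp (s / L))" by (intro Ck_on_compose[OF Ck_on_ramp]) auto
    then show "Ck_on k UNIV (saturation L)"
      unfolding saturation_def by (intro Ck_on_diff Ck_on_ident Ck_on_mult Ck_on_const)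
  qed
qed simp

lemma saturation_nonpos: "s \<le> 0 \<Longrightarrow> saturation L s = s"
  using L by (simp add: saturation_def ramp_nonpos divide_nonpos_pos)

lemma mono_saturation: "mono (saturation L)"
proof (rule monoI)
  fix s t :: real
  assume "s \<le> t"
  then show "saturation L s \<le> saturation L t"
    by (rule DERIV_nonneg_imp_nondecreasing)
      (use has_real_derivative_saturation ramp_deriv_le_1 in force)
qed

lemma saturation_tendsto: "(saturation L \<longlongrightarrow> L) at_top"
proof -
  have "((\<lambda>s. s - s * exp (- L / s)) \<longlongrightarrow> L) at_top" using L by real_asymp
  moreover have "\<forall>\<^sub>F s in at_top. s - s * exp (- L / s) = saturation L s"
    using eventually_gt_at_top[of 0]
    by (rule eventually_mono) (use L in \<open>auto simp: saturation_def ramp_def field_simps\<close>)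
  ultimately show ?thesis by (rule Lim_transform_eventually)
qed

end

lemma saturation_profile:
  fixes q :: real
  assumes q: "0 < q" "q < 1"
  shows "\<exists>xi L. smooth_on UNIV xi \<and> (\<forall>s\<le>0. xi s = s) \<and> mono xi \<and> L > 0 \<and>
    (xi \<longlongrightarrow> L) at_top \<and>
    (\<forall>s>0. 0 < deriv xi s \<and> deriv xi s < 1 \<and> deriv (deriv xi) s \<le> 0 \<and>
       - deriv (deriv xi) s \<le> deriv xi s * (1 - deriv xi s) powr q)"
proof -
  define L where "L = 135 / (1 - q)^3"
  have L: "0 < L" using q by (simp add: L_def)
  have "0 < deriv (saturation L) s \<and> deriv (saturation L) s < 1 \<and>
      deriv (deriv (saturation L)) s \<le> 0 \<and>
      - deriv (deriv (saturation L)) s \<le> deriv (saturation L) s * (1 - deriv (saturation L) s) powr q"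
    if s: "0 < s" for s
  proof -
    have sL: "0 < s / L" using s L by simp
    have d: "deriv (saturation L) s = 1 - ramp_deriv (s / L)"
      "deriv (deriv (saturation L)) s = - (ramp_deriv2 (s / L) / L)"
      using deriv2_eqI[OF open_UNIV UNIV_I has_real_derivative_saturation
          has_real_derivative_saturation_deriv[OF L s]] L by auto
    have "0 \<le> ramp_deriv2 (s / L)" using sL by (simp add: ramp_deriv2_def)
    moreover have "ramp_deriv2 (s / L) \<le> L * ((1 - ramp_deriv (s / L)) * ramp_deriv (s / L) powr q)"
      using ramp_deriv2_le_gap[OF sL q] unfolding L_def by (simp only: mult.assoc)
    ultimately show ?thesis
      using d L ramp_deriv_pos[OF sL] ramp_deriv_less_1[OF sL]
      by (simp add: pos_divide_le_eq mult.commute)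
  qed
  then show ?thesis
    using L smooth_on_saturation[OF L] mono_saturation[OF L] saturation_tendsto[OF L]
      saturation_nonpos[OF L]
    by (intro exI[of _ "saturation L"] exI[of _ L]) auto
qed

lemma regimes_imp_deriv2_le:
  fixes a q c u \<eta> G :: real
  assumes a: "0 \<le> a" and q: "0 < q" "q \<le> 1" and c: "0 \<le> c" and u: "0 < u"
    and \<eta>: "0 < \<eta>" "\<eta> \<le> 1" and G: "0 \<le> G"
    and c_powr: "c powr q = 2 * (a + 1) * \<eta> powr q / u"
    and regimes: "c * G / \<eta> \<le> c powr q \<or> u * G \<le> \<eta> powr (1 + q)"
  shows "(a + 1) * c * \<eta> / u + c * G / \<eta> \<le> c powr q * (1 + c)"
proof -
  have half: "(a + 1) * c * \<eta> powr q / u = c * c powr q / 2"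
    using u by (simp add: c_powr field_simps)
  have "\<eta> \<le> \<eta> powr q" using \<eta> q powr_mono'[of q 1 \<eta>] by simp
  then have "(a + 1) * c * \<eta> / u \<le> (a + 1) * c * \<eta> powr q / u"
    using a c u by (intro divide_right_mono mult_left_mono) auto
  then have first: "(a + 1) * c * \<eta> / u \<le> c * c powr q / 2" by (simp only: half)
  have expand: "c powr q * (1 + c) = c powr q + c * c powr q" by (simp add: algebra_simps)
  show ?thesis
  proof (cases "c * G / \<eta> \<le> c powr q")
    case True
    have "0 \<le> c * c powr q" using c by simp
    with first True expand show ?thesis by linarith
  next
    case False
    then have "u * G \<le> \<eta> powr (1 + q)" using regimes by blast
    then have "G / \<eta> \<le> \<eta> powr q / u" using \<eta> u by (simp add: powr_add field_simps)
    then have "c * (G / \<eta>) \<le> c * (\<eta> powr q / u)" using c by (rule mult_left_mono)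
    then have "c * G / \<eta> \<le> c * (\<eta> powr q / u)" by simp
    also have "\<dots> \<le> (a + 1) * (c * (\<eta> powr q / u))"
      using mult_right_mono[of 1 "a + 1" "c * (\<eta> powr q / u)"] a c u by simp
    also have "\<dots> = (a + 1) * c * \<eta> powr q / u" by simp
    also have "\<dots> = c * c powr q / 2" by (rule half)
    finally have "c * G / \<eta> \<le> c * c powr q / 2" .
    moreover have "0 \<le> c powr q" by simp
    ultimately show ?thesis using first expand by linarith
  qed
qed

lemma blowup_regime_small_s:
  fixes a K u \<eta> G :: real
  assumes a: "0 < a" and K: "0 < K" and u: "2 * (a + 1) * K powr (1/a) \<le> u"
    and G: "0 \<le> G" "G \<le> K * \<eta> powr (1 / (a + 1))"
  shows "(2 * (a + 1)) powr (a + 1) * u powr (-a-1) * G \<le> 2 * (a + 1) * \<eta> powr (1 / (a + 1)) / u"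
proof -
  define r where "r = 2 * (a + 1) / u"
  have "0 < 2 * (a + 1) * K powr (1/a)" using a K by simp
  then have u0: "0 < u" using u by linarith
  have r: "0 < r" "r \<le> K powr (-(1/a))"
    using u u0 a K by (auto simp: r_def powr_minus field_simps)
  have "r powr a \<le> (K powr (-(1/a))) powr a" using r a by (intro powr_mono2) auto
  also have "\<dots> = K powr (-1)" using a by (simp only: powr_powr) simp
  also have "\<dots> = 1 / K" using K by (simp add: powr_minus divide_inverse)
  finally have rK: "r powr a * K \<le> 1" using K by (simp add: field_simps)
  have B: "(2 * (a + 1)) powr (a + 1) * u powr (-a-1) = 2 * (a + 1) * r powr a / u"
    using a u0 by (simp add: r_def powr_add powr_divide powr_diff powr_minus field_simps)
  have "(2 * (a + 1)) powr (a + 1) * u powr (-a-1) * G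
      \<le> 2 * (a + 1) * r powr a / u * (K * \<eta> powr (1 / (a + 1)))"
    unfolding B using G a u0 by (intro mult_left_mono) auto
  also have "\<dots> = 2 * (a + 1) * (r powr a * K) * \<eta> powr (1 / (a + 1)) / u" by simp
  also have "\<dots> \<le> 2 * (a + 1) * 1 * \<eta> powr (1 / (a + 1)) / u"
    using rK a u0 by (intro divide_right_mono mult_right_mono mult_left_mono) auto
  finally show ?thesis by simp
qed

lemma blowup_regime_large_s:
  fixes s u q :: real
  assumes s: "4 \<le> s" and u: "0 \<le> u" "u \<le> 2 * s" and q: "0 < q" "q \<le> 1"
  shows "u * ramp_deriv2 s \<le> ramp_deriv s powr (1 + q)"
proof -
  have "u * ramp_deriv2 s \<le> 2 * s * (1 / s^3)"
    using u s ramp_deriv2_le_cube[of s] by (intro mult_mono) (auto simp: ramp_deriv2_def)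
  also have "\<dots> = 2 / s^2" using s by (simp add: power2_eq_square power3_eq_cube)
  also have "\<dots> \<le> 9/16"
  proof -
    have "16 \<le> s^2" using s power_mono[of 4 s 2] by simp
    then show ?thesis using s by (simp add: field_simps)
  qed
  also have "\<dots> \<le> ramp_deriv s ^ 2"
  proof -
    have "1/s \<le> 1/4" using s by (simp add: field_simps)
    then have "3/4 \<le> ramp_deriv s" using ramp_deriv_ge[of s] s by linarith
    then show ?thesis using power_mono[of "3/4" "ramp_deriv s" 2] by (simp add: power2_eq_square)
  qed
  also have "\<dots> \<le> ramp_deriv s powr (1 + q)"
    using q s ramp_deriv_pos[of s] ramp_deriv_le_1[of s] powr_mono'[of "1 + q" 2 "ramp_deriv s"]
    by (simp add: powr_numeral)
  finally show ?thesis .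
qed

(* R(b) must exceed this so that blowup_regime_small_s applies while R(b) - R(s) >= R(b)/2,
  and so that R(s) > R(b)/2 forces s >= 4. *)
definition blowup_threshold :: "real \<Rightarrow> real" where
  "blowup_threshold a = 4 * (a + 1) * (27 / (1 - 1 / (a + 1))^3) powr (1/a) + 8"

definition blowup_deriv :: "real \<Rightarrow> real \<Rightarrow> real \<Rightarrow> real" where
  "blowup_deriv a b s = (2 * (a + 1)) powr (a + 1) * (ramp b - ramp s) powr (-a-1) * ramp_deriv s"

definition blowup :: "real \<Rightarrow> real \<Rightarrow> real \<Rightarrow> real" where
  "blowup a b s = (2 * (a + 1)) powr (a + 1) / a * ((ramp b - ramp s) powr (-a) - ramp b powr (-a))"

context
  fixes a b :: real
  assumes a: "0 < a" and b: "0 < b"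
begin

lemma ramp_gap_pos: "s < b \<Longrightarrow> 0 < ramp b - ramp s"
  using ramp_less[OF _ b] by simp

lemma has_real_derivative_ramp_gap_powr:
  assumes "s < b"
  shows "((\<lambda>s. (ramp b - ramp s) powr r) has_real_derivative
    - r * (ramp b - ramp s) powr (r - 1) * ramp_deriv s) (at s)"
proof -
  have "((\<lambda>s. ramp b - ramp s) has_real_derivative 0 - ramp_deriv s) (at s)"
    by (intro derivative_intros has_real_derivative_ramp)
  from DERIV_chain2[OF has_real_derivative_powr[OF ramp_gap_pos[OF assms]] this]
  show ?thesis by simp
qed

lemma has_real_derivative_blowup:
  assumes "s < b"
  shows "(blowup a b has_real_derivative blowup_deriv a b s) (at s)"
proof -
  from DERIV_cmult[OF DERIV_diff[OF has_real_derivative_ramp_gap_powr[OF assms] DERIV_const]]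
  have "(blowup a b has_real_derivative (2 * (a + 1)) powr (a + 1) / a *
      (- (-a) * (ramp b - ramp s) powr (-a - 1) * ramp_deriv s - 0)) (at s)"
    unfolding blowup_def[abs_def] .
  then show ?thesis using a by (simp add: blowup_deriv_def mult.assoc)
qed

lemma has_real_derivative_blowup_deriv:
  assumes s: "0 < s" "s < b"
  shows "(blowup_deriv a b has_real_derivative
      (a + 1) * blowup_deriv a b s * ramp_deriv s / (ramp b - ramp s)
      + blowup_deriv a b s * ramp_deriv2 s / ramp_deriv s) (at s)"
proof -
  define B where "B = (2 * (a + 1)) powr (a + 1)"
  define g where "g = ramp b - ramp s"
  have g: "0 < g" using ramp_gap_pos[OF s(2)] by (simp add: g_def)
  have \<eta>: "0 < ramp_deriv s" using ramp_deriv_pos[OF s(1)] .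
  have "(blowup_deriv a b has_real_derivative
      B * (g powr (-a-1) * ramp_deriv2 s
        + - (-a-1) * g powr (-a-1-1) * ramp_deriv s * ramp_deriv s)) (at s)"
    using DERIV_cmult[OF DERIV_mult'[OF has_real_derivative_ramp_gap_powr[OF s(2), of "-a-1"]
        has_real_derivative_ramp_deriv[OF s(1)]], of B]
    unfolding blowup_deriv_def[abs_def] B_def g_def by (simp only: mult.assoc)
  moreover have "B * (g powr (-a-1) * ramp_deriv2 s
        + - (-a-1) * g powr (-a-1-1) * ramp_deriv s * ramp_deriv s)
      = (a + 1) * blowup_deriv a b s * ramp_deriv s / (ramp b - ramp s)
        + blowup_deriv a b s * ramp_deriv2 s / ramp_deriv s"
  proof -
    have "-a-1-1 + 1 = -a-1" by simp
    then have "g powr (-a-1-1) * g powr 1 = g powr (-a-1)" by (metis powr_add)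
    then have pow: "g powr (-a-1-1) = g powr (-a-1) / g" using g by (simp add: field_simps)
    show ?thesis
      unfolding blowup_deriv_def B_def[symmetric] g_def[symmetric] pow using g \<eta> by (simp add: field_simps)
  qed
  ultimately show ?thesis by simp
qed

lemma blowup_deriv_powr:
  assumes "s < b"
  shows "blowup_deriv a b s powr (1 / (a + 1))
    = 2 * (a + 1) * ramp_deriv s powr (1 / (a + 1)) / (ramp b - ramp s)"
proof -
  have g: "0 < ramp b - ramp s" using ramp_gap_pos[OF assms] .
  have \<eta>: "0 \<le> ramp_deriv s" by (simp add: ramp_deriv_def)
  have "(-a-1) * (1 / (a + 1)) = -1" using a by (simp add: field_simps)
  then have "((ramp b - ramp s) powr (-a-1)) powr (1 / (a + 1)) = inverse (ramp b - ramp s)"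
    using g by (simp add: powr_powr powr_minus)
  moreover have "((2 * (a + 1)) powr (a + 1)) powr (1 / (a + 1)) = 2 * (a + 1)"
    using a by (simp add: powr_powr)
  ultimately show ?thesis
    using \<eta> by (simp add: blowup_deriv_def powr_mult divide_inverse)
qed

lemma blowup_nonpos: "s \<le> 0 \<Longrightarrow> blowup a b s = 0"
  by (simp add: blowup_def ramp_nonpos)

lemma smooth_on_blowup: "smooth_on {..<b} (blowup a b)"
proof (rule smooth_onI)
  show "\<forall>k. Ck_on k {..<b} (blowup a b)"
  proof
    fix k
    have "Ck_on k {..<b} (\<lambda>s. ramp b - ramp s)" by (intro Ck_on_diff Ck_on_const Ck_on_ramp)
    moreover have "(\<lambda>s. ramp b - ramp s) ` {..<b} \<subseteq> {0<..}" using ramp_gap_pos by auto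
    ultimately have "Ck_on k {..<b} (\<lambda>s. (ramp b - ramp s) powr (-a))"
      by (intro Ck_on_compose[OF Ck_on_powr])
    then show "Ck_on k {..<b} (blowup a b)"
      unfolding blowup_def by (intro Ck_on_mult Ck_on_const Ck_on_diff)
  qed
qed simp

lemma blowup_tendsto: "filterlim (blowup a b) at_top (at_left b)"
proof -
  have "isCont ramp b" using has_real_derivative_ramp DERIV_isCont by blast
  then have "((\<lambda>s. ramp b - ramp s) \<longlongrightarrow> 0) (at_left b)"
    by (intro tendsto_eq_intros) (auto simp: isCont_def filterlim_at_split)
  moreover have "\<forall>\<^sub>F s in at_left b. ramp b - ramp s \<in> {0<..}"
    using eventually_at_left_real[OF b] by (rule eventually_mono) (use ramp_gap_pos in auto)
  ultimately have "filterlim (\<lambda>s. ramp b - ramp s) (at_right 0) (at_left b)"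
    by (auto simp: filterlim_at eventually_mono)
  moreover have "filterlim (\<lambda>g. g powr (-a)) at_top (at_right 0)" using a by real_asymp
  ultimately have "filterlim (\<lambda>s. (ramp b - ramp s) powr (-a)) at_top (at_left b)"
    by (rule filterlim_compose[rotated])
  then have "filterlim (\<lambda>s. - (ramp b powr (-a)) + (ramp b - ramp s) powr (-a)) at_top (at_left b)"
    by (rule filterlim_tendsto_add_at_top[OF tendsto_const])
  moreover have "0 < (2 * (a + 1)) powr (a + 1) / a" using a by simp
  ultimately have "filterlim (\<lambda>s. (2 * (a + 1)) powr (a + 1) / a *
      (- (ramp b powr (-a)) + (ramp b - ramp s) powr (-a))) at_top (at_left b)"
    using filterlim_tendsto_pos_mult_at_top[OF tendsto_const] by blast
  moreover have "blowup a b = (\<lambda>s. (2 * (a + 1)) powr (a + 1) / a *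
      (- (ramp b powr (-a)) + (ramp b - ramp s) powr (-a)))"
    by (simp add: blowup_def fun_eq_iff)
  ultimately show ?thesis by simp
qed

lemma blowup_deriv2_le:
  assumes big: "blowup_threshold a \<le> ramp b" and s: "0 < s" "s < b"
  shows "(a + 1) * blowup_deriv a b s * ramp_deriv s / (ramp b - ramp s)
      + blowup_deriv a b s * ramp_deriv2 s / ramp_deriv s
    \<le> blowup_deriv a b s powr (1 / (a + 1)) * (1 + blowup_deriv a b s)"
proof -
  define q where "q = 1 / (a + 1)"
  define K where "K = 27 / (1 - q)^3"
  define c where "c = blowup_deriv a b s"
  define u where "u = ramp b - ramp s"
  have q: "0 < q" "q < 1" using a by (auto simp: q_def)
  have K: "0 < K" using q by (simp add: K_def)
  have "0 \<le> 4 * (a + 1) * K powr (1/a)" using a by simp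
  then have big: "4 * (a + 1) * K powr (1/a) \<le> ramp b" "8 \<le> ramp b"
    using big by (auto simp: blowup_threshold_def K_def q_def)
  have u: "0 < u" using ramp_gap_pos[OF s(2)] by (simp add: u_def)
  have \<eta>: "0 < ramp_deriv s" "ramp_deriv s \<le> 1" using ramp_deriv_pos[OF s(1)] ramp_deriv_le_1 by auto
  have G: "0 \<le> ramp_deriv2 s" using s by (simp add: ramp_deriv2_def)
  have c: "0 \<le> c" using \<eta> by (simp add: c_def blowup_deriv_def)
  have c_powr: "c powr q = 2 * (a + 1) * ramp_deriv s powr q / u"
    using blowup_deriv_powr[OF s(2)] by (simp add: c_def q_def u_def)
  have "c * ramp_deriv2 s / ramp_deriv s \<le> c powr q \<or> u * ramp_deriv2 s \<le> ramp_deriv s powr (1 + q)"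
  proof (cases "ramp b / 2 \<le> u")
    case True
    have "c * ramp_deriv2 s / ramp_deriv s = (2 * (a + 1)) powr (a + 1) * u powr (-a-1) * ramp_deriv2 s"
      using \<eta> by (simp add: c_def blowup_deriv_def u_def)
    also have "\<dots> \<le> 2 * (a + 1) * ramp_deriv s powr q / u"
    proof (rule blowup_regime_small_s[OF a K _ G, folded q_def])
      show "2 * (a + 1) * K powr (1 / a) \<le> u" using True big(1) by linarith
      show "ramp_deriv2 s \<le> K * ramp_deriv s powr q"
        using ramp_deriv2_le[OF s(1) q] by (simp add: K_def)
    qed
    finally show ?thesis using c_powr by simp
  next
    case False
    then have "ramp b / 2 < ramp s" by (simp add: u_def)
    moreover have "ramp s \<le> s" using ramp_le_self s by simp
    ultimately have "4 \<le> s" "u \<le> 2 * s" using big(2) ramp_nonneg[of s] by (auto simp: u_def)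
    then show ?thesis using blowup_regime_large_s[of s u q] u q by simp
  qed
  from regimes_imp_deriv2_le[OF _ _ _ c u \<eta> G c_powr this] a q
  show ?thesis by (simp add: c_def u_def q_def)
qed

end

lemma blowup_profile:
  fixes q :: real
  assumes q: "0 < q" "q < 1"
  shows "\<exists>b > 0. \<exists>chi. smooth_on {..<b} chi \<and> (\<forall>s\<le>0. chi s = 0) \<and>
    filterlim chi at_top (at_left b) \<and>
    (\<forall>s\<in>{0<..<b}. deriv chi s > 0 \<and> deriv (deriv chi) s \<ge> 0 \<and>
       deriv (deriv chi) s \<le> deriv chi s powr q * (1 + deriv chi s))"
proof -
  define a where "a = 1 / q - 1"
  have a: "0 < a" and q_eq: "q = 1 / (a + 1)" using q by (auto simp: a_def field_simps)
  define b where "b = blowup_threshold a + 1"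
  have "8 \<le> blowup_threshold a" using a by (simp add: blowup_threshold_def)
  then have b: "0 < b" and big: "blowup_threshold a \<le> ramp b"
    using ramp_ge[of b] by (auto simp: b_def)
  have "deriv (blowup a b) s > 0 \<and> deriv (deriv (blowup a b)) s \<ge> 0 \<and>
      deriv (deriv (blowup a b)) s \<le> deriv (blowup a b) s powr q * (1 + deriv (blowup a b) s)"
    if "s \<in> {0<..<b}" for s
  proof -
    have s: "0 < s" "s < b" using that by auto
    have d: "deriv (blowup a b) s = blowup_deriv a b s"
      "deriv (deriv (blowup a b)) s
        = (a + 1) * blowup_deriv a b s * ramp_deriv s / (ramp b - ramp s)
          + blowup_deriv a b s * ramp_deriv2 s / ramp_deriv s"
      using deriv2_eqI[OF open_lessThan _ has_real_derivative_blowup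
          has_real_derivative_blowup_deriv] a b s by auto
    have \<eta>: "0 < ramp_deriv s" and gap: "0 < ramp b - ramp s" and G: "0 \<le> ramp_deriv2 s"
      using ramp_deriv_pos[OF s(1)] ramp_gap_pos[OF a b s(2)] s by (auto simp: ramp_deriv2_def)
    then have c: "0 < blowup_deriv a b s" using a by (simp add: blowup_deriv_def)
    moreover have "0 \<le> deriv (deriv (blowup a b)) s"
      unfolding d using a c \<eta> gap G by (intro add_nonneg_nonneg divide_nonneg_pos) auto
    ultimately show ?thesis using blowup_deriv2_le[OF a b big s] d q_eq by simp
  qed
  then show ?thesis
    using b smooth_on_blowup[OF a b] blowup_tendsto[OF a b] blowup_nonpos[OF a b]
    by (intro exI[of _ b] exI[of _ "blowup a b"]) auto
qed

theorem proposition3p6: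
  fixes m \<beta> :: real
  assumes "m > 2" and "0 < \<beta>" and "\<beta> < 1"
  shows "(\<exists>(b::real). b > 0 \<and> (\<exists>(chi :: real \<Rightarrow> real).
            smooth_on {..<b} chi \<and>
            (\<forall>s\<le>0. chi s = 0) \<and>
            filterlim chi at_top (at_left b) \<and>
            (\<forall>s\<in>{0<..<b}.
               deriv chi s > 0 \<and> deriv (deriv chi) s \<ge> 0 \<and>
               (m - 2) / m *
                 (deriv (deriv chi) s /
                   ((1 + deriv chi s) powr m - (1 + deriv chi s)) powr (2 / m))
                 powr (m / (m - 2))
               \<le> (deriv chi s) powr \<beta>)))
       \<and>
       (\<exists>(xi :: real \<Rightarrow> real) (M::real).
            smooth_on UNIV xi \<and>
            (\<forall>s\<le>0. xi s = s) \<and>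
            mono xi \<and> M > 0 \<and> (xi \<longlongrightarrow> M) at_top \<and>
            (\<forall>s>0.
               0 < deriv xi s \<and> deriv xi s < 1 \<and> deriv (deriv xi) s \<le> 0 \<and>
               (m - 2) / m *
                 (- deriv (deriv xi) s /
                   (deriv xi s - (deriv xi s) powr m) powr (2 / m))
                 powr (m / (m - 2))
               \<le> (1 - deriv xi s) powr \<beta>))"
proof -
  define q where "q = 2/m + \<beta> * (1 - 2/m)"
  have "0 < 2/m" "0 < 1 - 2/m" using assms(1) by auto
  moreover have "0 < \<beta> * (1 - 2/m)" "\<beta> * (1 - 2/m) < 1 - 2/m"
    using calculation(2) assms(2,3) mult_strict_right_mono[of \<beta> 1 "1 - 2/m"] by auto
  ultimately have "0 < q" "q < 1" unfolding q_def by linarith+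
  then obtain b chi xi L where
    chi: "b > 0" "smooth_on {..<b} chi" "\<forall>s\<le>0. chi s = 0" "filterlim chi at_top (at_left b)"
      "\<forall>s\<in>{0<..<b}. deriv chi s > 0 \<and> deriv (deriv chi) s \<ge> 0 \<and>
         deriv (deriv chi) s \<le> deriv chi s powr q * (1 + deriv chi s)" and
    xi: "smooth_on UNIV xi" "\<forall>s\<le>0. xi s = s" "mono xi" "L > 0" "(xi \<longlongrightarrow> L) at_top"
      "\<forall>s>0. 0 < deriv xi s \<and> deriv xi s < 1 \<and> deriv (deriv xi) s \<le> 0 \<and>
         - deriv (deriv xi) s \<le> deriv xi s * (1 - deriv xi s) powr q"
    using blowup_profile saturation_profile by metis
  have "(m - 2) / m * (deriv (deriv chi) s /
      ((1 + deriv chi s) powr m - (1 + deriv chi s)) powr (2 / m)) powr (m / (m - 2))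
    \<le> deriv chi s powr \<beta>" if "s \<in> {0<..<b}" for s
    using chi(5) that by (intro blowup_ineq_of_le[OF assms(1)]) (auto simp: q_def)
  moreover have "(m - 2) / m * (- deriv (deriv xi) s /
      (deriv xi s - deriv xi s powr m) powr (2 / m)) powr (m / (m - 2))
    \<le> (1 - deriv xi s) powr \<beta>" if "s > 0" for s
    using xi(6) that by (intro saturation_ineq_of_le[OF assms(1)]) (auto simp: q_def)
  ultimately show ?thesis using chi xi by blast
qed

end
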